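(* Let $S$ be a nonempty subset of $\mathbb{Z}$ and $\mathcal{T}\subseteq\mathbb{N}$. Then for all integers $0\le\ell\le k<|S|$, the generalized binomial coefficient $\binom{k}{\ell}_{S,\mathcal{T}}:=\dfrac{k!_{S,\mathcal{T}}}{\ell!_{S,\mathcal{T}}\,(k-\ell)!_{S,\mathcal{T}}}$ is a positive integer.
   Context: $\mathbb{N}=\{0,1,2,\dots\}$. For an integer $b\ge0$ and $a\in\mathbb{Z}$ define $\operatorname{ord}_b(a):=\sup\{k\in\mathbb{N}: a\mathbb{Z}\subseteq b^k\mathbb{Z}\}$ (convention $0^0=1$); thus for $b\ge2$ it is the largest $k$ with $b^k\mid a$ ($+\infty$ for $a=0$), $\operatorname{ord}_0(a)=+\infty$ if $a=0$ and $0$ otherwise, and $\operatorname{ord}_1(a)=+\infty$. For nonempty $S\subseteq\mathbb{Z}$, a $b$-ordering of $S$ is a sequence $(a_i)_{i\ge0}$ in $S$ such that for each $i\ge1$, $a_i$ attains $\min_{a'\in S}\sum_{j=0}^{i-1}\operatorname{ord}_b(a'-a_j)$; the $b$-exponent sequence is $\alpha_k(S,b):=\sum_{j=0}^{k-1}\operatorname{ord}_b(a_k-a_j)$ for any $b$-ordering (independent of the choice). For $\mathcal{T}\subseteq\mathbb{N}$ the generalized factorial is $k!_{S,\mathcal{T}}:=\prod_{b\in\mathcal{T}}b^{\alpha_k(S,b)}$, with conventions $b^{+\infty}=0$ for $b=0$ and $b\ge2$, $1^{+\infty}=1$, and $b^0=1$ for all $b\in\mathbb{N}$. *)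

theory Defs
  imports Main "HOL-Library.Extended_Nat" "HOL-Library.Groups_Big_Fun"
begin

text \<open>ord_b(a) = sup {k. a Z \<subseteq> b^k Z}, with 0^0 = 1 (as in Isabelle's power).\<close>
definition ord_b :: "nat \<Rightarrow> int \<Rightarrow> enat" where
  "ord_b b a = (SUP k \<in> {k::nat. (int b) ^ k dvd a}. enat k)"

definition is_b_ordering :: "int set \<Rightarrow> nat \<Rightarrow> (nat \<Rightarrow> int) \<Rightarrow> bool" where
  "is_b_ordering S b a \<longleftrightarrow>
     (\<forall>i. a i \<in> S) \<and>
     (\<forall>i\<ge>1. \<forall>a'\<in>S. (\<Sum>j<i. ord_b b (a i - a j)) \<le> (\<Sum>j<i. ord_b b (a' - a j)))"

text \<open>b-exponent sequence, computed from some (any) b-ordering.\<close>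
definition alpha_seq :: "int set \<Rightarrow> nat \<Rightarrow> nat \<Rightarrow> enat" where
  "alpha_seq S b k = (let a = (SOME a. is_b_ordering S b a) in (\<Sum>j<k. ord_b b (a k - a j)))"

fun epow :: "nat \<Rightarrow> enat \<Rightarrow> nat" where
  "epow b (enat n) = b ^ n"
| "epow b \<infinity> = (if b = 1 then 1 else 0)"

definition gen_fact :: "int set \<Rightarrow> nat set \<Rightarrow> nat \<Rightarrow> nat" where
  "gen_fact S T k = Prod_any (\<lambda>b. if b \<in> T then epow b (alpha_seq S b k) else 1)"

end

theory Submission
  imports Defs "HOL-Computational_Algebra.Formal_Power_Series"
begin

text \<open>
  Write \<open>\<alpha>\<^sub>b(k)\<close> for the \<open>b\<close>-exponents of \<open>S\<close>. For \<open>k < |S|\<close> the factors with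
  \<open>b \<in> {0, 1}\<close> are all \<open>1\<close>, so the claim reduces, factor by factor, to the superadditivity
  \<open>\<alpha>\<^sub>b(l) + \<alpha>\<^sub>b(m) \<le> \<alpha>\<^sub>b(l + m)\<close> for \<open>b \<ge> 2\<close>.

  Superadditivity is Bhargava's argument. Sending an integer to the power series of its
  base-\<open>b\<close> digits turns \<open>ord\<^sub>b (x - y)\<close> into the \<open>X\<close>-adic valuation of a difference, a
  genuine valuation even for composite \<open>b\<close>. Expanding \<open>\<Prod>j<k. X - u j\<close> in the Newton basis
  \<open>\<Prod>j<t. X - w j\<close> of a \<open>b\<close>-ordering \<open>w\<close> shows that some \<open>i \<le> k\<close> has
  \<open>val (\<Prod>j<k. w i - u j) \<le> \<alpha>\<^sub>b(k)\<close>; taking for \<open>u\<close> the first \<open>l\<close> followed by the first \<open>m\<close>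
  terms of \<open>w\<close> and using the minimality of \<open>w\<close> gives the inequality.

  The products defining the factorials are finite because \<open>\<alpha>\<^sub>b(k) = 0\<close> as soon as \<open>b\<close>
  exceeds the diameter of some \<open>k + 1\<close> elements of \<open>S\<close> (pigeonhole).
\<close>

lemma enat_le_if_finite_lower_bounds:
  fixes x y :: enat
  assumes "\<And>e. enat e \<le> x \<Longrightarrow> enat e \<le> y"
  shows "x \<le> y"
proof (rule ccontr)
  assume "\<not> x \<le> y"
  then obtain n where "y = enat n" "enat n < x"
    by (cases y) auto
  then show False
    using assms[of "Suc n"] ileI1[of "enat n" x] by (simp add: eSuc_enat)
qed

lemma enat_eqI_lower_bounds:
  fixes x y :: enat
  assumes "\<And>e. enat e \<le> x \<longleftrightarrow> enat e \<le> y"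
  shows "x = y"
  using assms by (metis antisym enat_le_if_finite_lower_bounds)

lemma enat_le_ord_b_iff: "enat e \<le> ord_b b a \<longleftrightarrow> int b ^ e dvd a"
proof
  assume "int b ^ e dvd a"
  then show "enat e \<le> ord_b b a" unfolding ord_b_def by (intro SUP_upper2[of e]) auto
next
  assume le: "enat e \<le> ord_b b a"
  show "int b ^ e dvd a"
  proof (rule ccontr)
    assume not_dvd: "\<not> int b ^ e dvd a"
    have "enat k \<le> enat (e - 1)" if "int b ^ k dvd a" for k
    proof -
      have "k < e"
        using not_dvd that le_imp_power_dvd[of e k "int b"] dvd_trans not_less by blast
      then show ?thesis by simp
    qed
    then have "ord_b b a \<le> enat (e - 1)"
      unfolding ord_b_def by (intro SUP_least) auto
    from order_trans[OF le this] have "e \<le> e - 1"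
      by simp
    moreover have "e \<noteq> 0"
      using not_dvd by (metis power_0 one_dvd)
    ultimately show False
      by simp
  qed
qed

lemma ord_b_eq_0_iff: "ord_b b a = 0 \<longleftrightarrow> \<not> int b dvd a"
proof -
  have "ord_b b a = 0 \<longleftrightarrow> \<not> enat 1 \<le> ord_b b a"
    by (cases "ord_b b a") (auto simp: one_enat_def zero_enat_def)
  then show ?thesis
    by (simp add: enat_le_ord_b_iff)
qed

lemma ord_b_neq_infinity:
  assumes "b \<noteq> 1" "a \<noteq> 0"
  shows "ord_b b a \<noteq> \<infinity>"
proof
  assume "ord_b b a = \<infinity>"
  then have dvd: "int b ^ e dvd a" for e
    using enat_le_ord_b_iff[of e b a] by simp
  show False
  proof (cases "b = 0")
    case True
    then show ?thesis using dvd[of 1] assms by simp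
  next
    case False
    with assms have "(2::int) ^ nat \<bar>a\<bar> \<le> int b ^ nat \<bar>a\<bar>"
      by (intro power_mono) auto
    also have "\<dots> \<le> \<bar>a\<bar>"
      using dvd_imp_le_int[OF assms(2) dvd] by simp
    finally show False
      using of_nat_less_two_power[of "nat \<bar>a\<bar>", where 'a=int] by simp
  qed
qed

definition fps_val :: "'a::zero fps \<Rightarrow> enat" where
  "fps_val f = (if f = 0 then \<infinity> else enat (subdegree f))"

lemma enat_le_fps_val_iff: "enat e \<le> fps_val f \<longleftrightarrow> (\<forall>i<e. fps_nth f i = 0)"
  unfolding fps_val_def
  by (auto intro: subdegree_geI dest: nth_less_subdegree_zero[OF less_le_trans])

lemma fps_val_mult:
  fixes f g :: "'a::semiring_no_zero_divisors fps"
  shows "fps_val (f * g) = fps_val f + fps_val g"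
  by (simp add: fps_val_def)

lemma fps_val_1 [simp]: "fps_val (1 :: 'a::zero_neq_one fps) = 0"
  by (simp add: fps_val_def zero_enat_def)

lemma fps_val_prod:
  fixes f :: "'b \<Rightarrow> 'a::{comm_semiring_1, semiring_no_zero_divisors} fps"
  shows "fps_val (\<Prod>i\<in>A. f i) = (\<Sum>i\<in>A. fps_val (f i))"
  by (induction A rule: infinite_finite_induct) (simp_all add: fps_val_mult)

lemma fps_val_diff_ge:
  fixes f g :: "'a::ab_group_add fps"
  assumes "N \<le> fps_val f" "N \<le> fps_val g"
  shows "N \<le> fps_val (f - g)"
proof (rule enat_le_if_finite_lower_bounds)
  fix e assume "enat e \<le> N"
  with assms have "enat e \<le> fps_val f" "enat e \<le> fps_val g"
    by simp_all
  then show "enat e \<le> fps_val (f - g)"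
    by (simp add: enat_le_fps_val_iff)
qed

lemma fps_val_sum_ge:
  fixes f :: "'b \<Rightarrow> 'a::comm_monoid_add fps"
  assumes "\<And>i. i \<in> A \<Longrightarrow> N \<le> fps_val (f i)"
  shows "N \<le> fps_val (\<Sum>i\<in>A. f i)"
proof (rule enat_le_if_finite_lower_bounds)
  fix e assume "enat e \<le> N"
  with assms have "enat e \<le> fps_val (f i)" if "i \<in> A" for i
    using that order_trans by blast
  then show "enat e \<le> fps_val (\<Sum>i\<in>A. f i)"
    by (simp add: enat_le_fps_val_iff fps_sum_nth)
qed

lemma int_mod_power_eq_iff_digits:
  fixes b x y :: int
  assumes "b > 0"
  shows "x mod b ^ e = y mod b ^ e \<longleftrightarrow> (\<forall>i<e. x div b ^ i mod b = y div b ^ i mod b)"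
proof (induction e)
  case (Suc e)
  have split: "z mod b ^ Suc e = b ^ e * (z div b ^ e mod b) + z mod b ^ e" for z
    using zmod_zmult2_eq[of b z "b ^ e"] assms by (simp add: mult.commute)
  have "x mod b ^ Suc e = y mod b ^ Suc e \<longleftrightarrow>
        x mod b ^ e = y mod b ^ e \<and> x div b ^ e mod b = y div b ^ e mod b"
  proof
    assume eq: "x mod b ^ Suc e = y mod b ^ Suc e"
    have "b ^ e dvd b ^ Suc e"
      by simp
    with eq have "x mod b ^ e = y mod b ^ e"
      by (metis mod_mod_cancel)
    with eq show "x mod b ^ e = y mod b ^ e \<and> x div b ^ e mod b = y div b ^ e mod b"
      using split[of x] split[of y] assms by simp
  qed (use split in simp)
  with Suc.IH show ?case
    using less_Suc_eq by auto
qed simp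

definition digit_fps :: "nat \<Rightarrow> int \<Rightarrow> int fps" where
  "digit_fps b x = Abs_fps (\<lambda>i. x div int b ^ i mod int b)"

lemma ord_b_diff_eq_fps_val:
  assumes "b \<ge> 2"
  shows "ord_b b (x - y) = fps_val (digit_fps b x - digit_fps b y)"
proof (rule enat_eqI_lower_bounds)
  fix e
  have "enat e \<le> ord_b b (x - y) \<longleftrightarrow> x mod int b ^ e = y mod int b ^ e"
    by (simp add: enat_le_ord_b_iff mod_eq_dvd_iff)
  also have "\<dots> \<longleftrightarrow> (\<forall>i<e. x div int b ^ i mod int b = y div int b ^ i mod int b)"
    using int_mod_power_eq_iff_digits[of "int b"] assms by simp
  also have "\<dots> \<longleftrightarrow> enat e \<le> fps_val (digit_fps b x - digit_fps b y)"
    by (simp add: enat_le_fps_val_iff digit_fps_def)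
  finally show "enat e \<le> ord_b b (x - y) \<longleftrightarrow> enat e \<le> fps_val (digit_fps b x - digit_fps b y)" .
qed

lemma prod_diff_newton_expansion:
  fixes w u :: "nat \<Rightarrow> 'a::comm_ring_1"
  obtains c where "c k = 1" "\<And>x. (\<Prod>j<k. x - u j) = (\<Sum>t\<le>k. c t * (\<Prod>j<t. x - w j))"
proof (induction k arbitrary: thesis)
  case 0
  show ?case by (rule 0[of "\<lambda>_. 1"]) simp_all
next
  case (Suc k)
  obtain c where c_k: "c k = 1"
    and expand: "\<And>x. (\<Prod>j<k. x - u j) = (\<Sum>t\<le>k. c t * (\<Prod>j<t. x - w j))"
    using Suc.IH by blast
  define c' where
    "c' t = (if t = 0 then 0 else c (t - 1)) + (if t \<le> k then c t * (w t - u k) else 0)" for t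
  show ?case
  proof (rule Suc.prems)
    show "c' (Suc k) = 1"
      using c_k by (simp add: c'_def)
    fix x
    let ?N = "\<lambda>t. \<Prod>j<t. x - w j"
    \<comment> \<open>multiply by \<open>x - u k = (x - w t) + (w t - u k)\<close> termwise\<close>
    have "(\<Prod>j<Suc k. x - u j) = (\<Sum>t\<le>k. c t * ?N (Suc t) + c t * (w t - u k) * ?N t)"
      unfolding prod.lessThan_Suc expand sum_distrib_right
      by (intro sum.cong) (auto simp: algebra_simps)
    also have "\<dots> = (\<Sum>t\<le>Suc k. c' t * ?N t)"
      unfolding sum.distrib c'_def distrib_right
        sum.atMost_Suc_shift[of "\<lambda>t. (if t = 0 then 0 else c (t - 1)) * ?N t"]
      by (simp add: sum.atMost_Suc)
    finally show "(\<Prod>j<Suc k. x - u j) = (\<Sum>t\<le>Suc k. c' t * ?N t)" .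
  qed
qed

lemma exists_fps_val_prod_diff_le:
  fixes w u :: "nat \<Rightarrow> 'a::idom fps" and \<alpha> :: "nat \<Rightarrow> enat"
  assumes lower: "\<And>s t. s < t \<Longrightarrow> t \<le> k \<Longrightarrow> \<alpha> s \<le> fps_val (\<Prod>j<s. w t - w j)"
    and exact: "\<And>t. t \<le> k \<Longrightarrow> fps_val (\<Prod>j<t. w t - w j) = \<alpha> t"
  shows "\<exists>i\<le>k. fps_val (\<Prod>j<k. w i - u j) \<le> \<alpha> k"
proof -
  obtain c where c_k: "c k = 1"
    and expand: "\<And>x. (\<Prod>j<k. x - u j) = (\<Sum>t\<le>k. c t * (\<Prod>j<t. x - w j))"
    using prod_diff_newton_expansion[of k u w] by blast
  define N where "N = (MIN i\<in>{..k}. fps_val (\<Prod>j<k. w i - u j))"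
  have N_le: "N \<le> fps_val (\<Prod>j<k. w i - u j)" if "i \<le> k" for i
    unfolding N_def using that by (intro Min_le) auto
  \<comment> \<open>evaluate the expansion at \<open>w t\<close>: the terms with \<open>s > t\<close> vanish\<close>
  have N_le_coeff: "N \<le> fps_val (c t) + \<alpha> t" if "t \<le> k" for t
    using that
  proof (induction t rule: less_induct)
    case (less t)
    let ?N = "\<lambda>s. \<Prod>j<s. w t - w j"
    have "(\<Prod>j<k. w t - u j) = (\<Sum>s\<le>t. c s * ?N s)"
      unfolding expand using less.prems
      by (intro sum.mono_neutral_right) (auto intro!: prod_zero)
    then have top: "c t * ?N t = (\<Prod>j<k. w t - u j) - (\<Sum>s<t. c s * ?N s)"
      by (simp add: lessThan_Suc_atMost[symmetric])
    have "N \<le> fps_val (\<Sum>s<t. c s * ?N s)"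
    proof (rule fps_val_sum_ge)
      fix s assume "s \<in> {..<t}"
      then have "N \<le> fps_val (c s) + \<alpha> s"
        using less by simp
      also have "\<dots> \<le> fps_val (c s) + fps_val (?N s)"
        using lower[of s t] \<open>s \<in> {..<t}\<close> less.prems by (simp add: add_left_mono)
      finally show "N \<le> fps_val (c s * ?N s)"
        by (simp add: fps_val_mult)
    qed
    then have "N \<le> fps_val (c t * ?N t)"
      unfolding top using N_le less.prems by (intro fps_val_diff_ge)
    then show ?case
      by (simp add: fps_val_mult exact less.prems)
  qed
  have "N \<in> (\<lambda>i. fps_val (\<Prod>j<k. w i - u j)) ` {..k}"
    unfolding N_def by (intro Min_in) auto
  then obtain i where i: "i \<le> k" "fps_val (\<Prod>j<k. w i - u j) = N"
    by auto
  have "N \<le> \<alpha> k"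
    using N_le_coeff[of k] c_k by simp
  with i show ?thesis
    by (intro exI[of _ i]) simp
qed

lemma ex_minimizer_wellorder:
  fixes f :: "'a \<Rightarrow> 'b::wellorder"
  assumes "S \<noteq> {}"
  shows "\<exists>x\<in>S. \<forall>x'\<in>S. f x \<le> f x'"
proof -
  obtain v where "v \<in> f ` S" and least: "\<And>v'. v' < v \<Longrightarrow> v' \<notin> f ` S"
    using exists_least_iff[of "\<lambda>v. v \<in> f ` S"] assms by blast
  then obtain x where "x \<in> S" "f x = v"
    by blast
  with least show ?thesis
    using not_le by blast
qed

function greedy_b_ordering :: "int set \<Rightarrow> nat \<Rightarrow> nat \<Rightarrow> int" where
  "greedy_b_ordering S b i =
     (SOME x. x \<in> S \<and> (\<forall>x'\<in>S. (\<Sum>j<i. ord_b b (x - greedy_b_ordering S b j))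
                                   \<le> (\<Sum>j<i. ord_b b (x' - greedy_b_ordering S b j))))"
  by auto
termination
  by (relation "measure (\<lambda>(S, b, i). i)") auto

\<comment> \<open>as a rewrite rule the recursive equation would unfold forever\<close>
declare greedy_b_ordering.simps [simp del]

lemma is_b_ordering_greedy:
  assumes "S \<noteq> {}"
  shows "is_b_ordering S b (greedy_b_ordering S b)"
proof -
  define minimal where "minimal i x \<longleftrightarrow> x \<in> S \<and>
      (\<forall>x'\<in>S. (\<Sum>j<i. ord_b b (x - greedy_b_ordering S b j))
                \<le> (\<Sum>j<i. ord_b b (x' - greedy_b_ordering S b j)))" for i x
  have "minimal i (greedy_b_ordering S b i)" for i
  proof -
    have "\<exists>x. minimal i x"
      using ex_minimizer_wellorder[OF assms, of "\<lambda>x. \<Sum>j<i. ord_b b (x - greedy_b_ordering S b j)"]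
      unfolding minimal_def by blast
    then have "minimal i (SOME x. minimal i x)"
      by (rule someI_ex)
    moreover have "greedy_b_ordering S b i = (SOME x. minimal i x)"
      unfolding minimal_def by (rule greedy_b_ordering.simps)
    ultimately show ?thesis
      by simp
  qed
  then show ?thesis
    unfolding is_b_ordering_def minimal_def by blast
qed

definition some_b_ordering :: "int set \<Rightarrow> nat \<Rightarrow> nat \<Rightarrow> int" where
  "some_b_ordering S b = (SOME a. is_b_ordering S b a)"

lemma is_b_ordering_some:
  assumes "S \<noteq> {}"
  shows "is_b_ordering S b (some_b_ordering S b)"
  unfolding some_b_ordering_def
  by (rule someI[where P = "is_b_ordering S b", OF is_b_ordering_greedy[OF assms]])

lemma alpha_seq_eq:
  "alpha_seq S b k = (\<Sum>j<k. ord_b b (some_b_ordering S b k - some_b_ordering S b j))"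
  by (simp add: alpha_seq_def some_b_ordering_def Let_def)

lemma b_ordering_minimal:
  assumes "is_b_ordering S b a" "x \<in> S"
  shows "(\<Sum>j<k. ord_b b (a k - a j)) \<le> (\<Sum>j<k. ord_b b (x - a j))"
proof (cases "k = 0")
  case False
  then have "1 \<le> k"
    by simp
  with assms show ?thesis
    unfolding is_b_ordering_def by blast
qed simp

lemma alpha_seq_le:
  assumes "S \<noteq> {}" "x \<in> S"
  shows "alpha_seq S b k \<le> (\<Sum>j<k. ord_b b (x - some_b_ordering S b j))"
  unfolding alpha_seq_eq by (rule b_ordering_minimal[OF is_b_ordering_some[OF assms(1)] assms(2)])

lemma b_ordering_exponents_superadditive:
  assumes a: "is_b_ordering S b a" and "b \<ge> 2"
  shows "(\<Sum>j<l. ord_b b (a l - a j)) + (\<Sum>j<m. ord_b b (a m - a j))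
           \<le> (\<Sum>j<l + m. ord_b b (a (l + m) - a j))"
proof -
  define \<beta> where "\<beta> k = (\<Sum>j<k. ord_b b (a k - a j))" for k
  define w where "w t = digit_fps b (a t)" for t
  define y where "y j = (if j < l then a j else a (j - l))" for j
  have val_prod: "fps_val (\<Prod>j<n. digit_fps b x - digit_fps b (z j)) = (\<Sum>j<n. ord_b b (x - z j))"
    for n x z
    by (simp add: fps_val_prod ord_b_diff_eq_fps_val[OF \<open>b \<ge> 2\<close>])
  have a_in: "a t \<in> S" for t
    using a unfolding is_b_ordering_def by blast
  obtain i where i: "fps_val (\<Prod>j<l + m. w i - digit_fps b (y j)) \<le> \<beta> (l + m)"
  proof -
    have "\<exists>i\<le>l + m. fps_val (\<Prod>j<l + m. w i - digit_fps b (y j)) \<le> \<beta> (l + m)"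
    proof (rule exists_fps_val_prod_diff_le)
      fix s t :: nat
      show "\<beta> s \<le> fps_val (\<Prod>j<s. w t - w j)"
        unfolding \<beta>_def w_def val_prod by (rule b_ordering_minimal[OF a a_in])
      show "fps_val (\<Prod>j<t. w t - w j) = \<beta> t"
        unfolding \<beta>_def w_def val_prod ..
    qed
    then show ?thesis
      using that by blast
  qed
  have "\<beta> l + \<beta> m \<le> (\<Sum>j<l. ord_b b (a i - a j)) + (\<Sum>j<m. ord_b b (a i - a j))"
    unfolding \<beta>_def by (intro add_mono b_ordering_minimal[OF a a_in])
  also have "\<dots> = fps_val (\<Prod>j<l + m. w i - digit_fps b (y j))"
  proof -
    have split: "(\<Sum>j<l + n. g j) = (\<Sum>j<l. g j) + (\<Sum>j<n. g (l + j))"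
      for n and g :: "nat \<Rightarrow> enat"
      by (induction n) (simp_all add: algebra_simps)
    show ?thesis
      unfolding w_def val_prod split by (simp add: y_def)
  qed
  also note i
  finally show ?thesis
    unfolding \<beta>_def .
qed

lemma alpha_seq_superadditive:
  assumes "S \<noteq> {}" "b \<ge> 2"
  shows "alpha_seq S b l + alpha_seq S b m \<le> alpha_seq S b (l + m)"
  unfolding alpha_seq_eq
  by (rule b_ordering_exponents_superadditive[OF is_b_ordering_some[OF assms(1)] assms(2)])

lemma exists_incongruent_to_all:
  fixes Z :: "int set" and a :: "nat \<Rightarrow> int"
  assumes "k < card Z"
    and incongruent: "\<And>z z'. z \<in> Z \<Longrightarrow> z' \<in> Z \<Longrightarrow> d dvd z - z' \<Longrightarrow> z = z'"
  shows "\<exists>z\<in>Z. \<forall>j<k. \<not> d dvd z - a j"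
proof (rule ccontr)
  assume "\<not> ?thesis"
  then obtain g where g: "\<And>z. z \<in> Z \<Longrightarrow> g z < k \<and> d dvd z - a (g z)"
    by metis
  have "inj_on g Z"
  proof (rule inj_onI)
    fix z z' assume "z \<in> Z" "z' \<in> Z" "g z = g z'"
    with g have "d dvd (z - a (g z)) - (z' - a (g z))"
      by (metis dvd_diff)
    with \<open>z \<in> Z\<close> \<open>z' \<in> Z\<close> show "z = z'"
      using incongruent by simp
  qed
  then have "card Z \<le> card {..<k}"
    using g by (intro card_inj_on_le) auto
  with \<open>k < card Z\<close> show False
    by simp
qed

lemma obtain_subset_card_Suc:
  assumes "finite S \<longrightarrow> k < card S"
  obtains Z where "Z \<subseteq> S" "finite Z" "card Z = Suc k"
proof (cases "finite S")
  case True
  with assms show ?thesis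
    using obtain_subset_with_card_n[of "Suc k" S] that finite_subset by (metis Suc_leI)
next
  case False
  then show ?thesis
    using infinite_arbitrarily_large[of S "Suc k"] that by blast
qed

lemma alpha_seq_eq_0_if_incongruent_subset:
  assumes "S \<noteq> {}" "Z \<subseteq> S" "k < card Z"
    and "\<And>z z'. z \<in> Z \<Longrightarrow> z' \<in> Z \<Longrightarrow> int b dvd z - z' \<Longrightarrow> z = z'"
  shows "alpha_seq S b k = 0"
proof -
  obtain z where "z \<in> Z" and z: "\<forall>j<k. \<not> int b dvd z - some_b_ordering S b j"
    using exists_incongruent_to_all[OF assms(3,4)] by blast
  have "alpha_seq S b k \<le> (\<Sum>j<k. ord_b b (z - some_b_ordering S b j))"
    using alpha_seq_le assms(1,2) \<open>z \<in> Z\<close> by blast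
  also have "\<dots> = 0"
    using z by (simp add: ord_b_eq_0_iff)
  finally show ?thesis
    by simp
qed

lemma alpha_seq_0:
  assumes "S \<noteq> {}" "finite S \<longrightarrow> k < card S"
  shows "alpha_seq S 0 k = 0"
proof -
  obtain Z where "Z \<subseteq> S" "finite Z" "card Z = Suc k"
    using obtain_subset_card_Suc[OF assms(2)] .
  then show ?thesis
    by (intro alpha_seq_eq_0_if_incongruent_subset[OF assms(1)]) auto
qed

lemma finite_alpha_seq_support:
  assumes "S \<noteq> {}" "finite S \<longrightarrow> k < card S"
  shows "finite {b. alpha_seq S b k \<noteq> 0}"
proof -
  obtain Z where Z: "Z \<subseteq> S" "finite Z" "card Z = Suc k"
    using obtain_subset_card_Suc[OF assms(2)] .
  define M where "M = Max (abs ` Z)"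
  have "alpha_seq S b k = 0" if "2 * M < int b" for b
  proof (rule alpha_seq_eq_0_if_incongruent_subset[OF assms(1) Z(1)])
    show "k < card Z"
      using Z by simp
    fix z z' assume "z \<in> Z" "z' \<in> Z" "int b dvd z - z'"
    moreover have "\<bar>z\<bar> \<le> M" "\<bar>z'\<bar> \<le> M"
      unfolding M_def using Z(2) \<open>z \<in> Z\<close> \<open>z' \<in> Z\<close> by (auto intro!: Max_ge)
    then have "\<bar>z - z'\<bar> < int b"
      using that by linarith
    ultimately show "z = z'"
      using dvd_imp_le_int[of "z - z'" "int b"] by force
  qed
  then have "{b. alpha_seq S b k \<noteq> 0} \<subseteq> {..nat (2 * M)}"
    by (force simp: not_less[symmetric])
  then show ?thesis
    using finite_subset by blast
qed

lemma sum_enat_neq_infinity: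
  fixes f :: "'a \<Rightarrow> enat"
  shows "(\<And>i. i \<in> A \<Longrightarrow> f i \<noteq> \<infinity>) \<Longrightarrow> sum f A \<noteq> \<infinity>"
  by (induction A rule: infinite_finite_induct) (simp_all add: plus_eq_infty_iff_enat)

lemma alpha_seq_neq_infinity:
  assumes "S \<noteq> {}" "finite S \<longrightarrow> k < card S" "b \<noteq> 1"
  shows "alpha_seq S b k \<noteq> \<infinity>"
proof -
  obtain Z where "Z \<subseteq> S" "finite Z" "card Z = Suc k"
    using obtain_subset_card_Suc[OF assms(2)] .
  then obtain x where "x \<in> S" and new: "\<forall>j<k. x \<noteq> some_b_ordering S b j"
    using exists_incongruent_to_all[of k Z 0 "some_b_ordering S b"] by auto
  have "(\<Sum>j<k. ord_b b (x - some_b_ordering S b j)) \<noteq> \<infinity>"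
    using new assms(3) by (intro sum_enat_neq_infinity) (simp add: ord_b_neq_infinity)
  moreover have "alpha_seq S b k \<le> (\<Sum>j<k. ord_b b (x - some_b_ordering S b j))"
    by (rule alpha_seq_le[OF assms(1) \<open>x \<in> S\<close>])
  ultimately show ?thesis
    by (metis enat_ord_simps(5) top.extremum_uniqueI)
qed

lemma epow_0 [simp]: "epow b 0 = 1"
  by (simp add: zero_enat_def)

lemma epow_1 [simp]: "epow (Suc 0) e = 1"
  by (cases e) simp_all

definition gen_fact_factor :: "int set \<Rightarrow> nat set \<Rightarrow> nat \<Rightarrow> nat \<Rightarrow> nat" where
  "gen_fact_factor S T k b = (if b \<in> T then epow b (alpha_seq S b k) else 1)"

lemma gen_fact_eq_Prod_any: "gen_fact S T k = Prod_any (gen_fact_factor S T k)"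
  unfolding gen_fact_def gen_fact_factor_def ..

lemma finite_gen_fact_factor_support:
  assumes "S \<noteq> {}" "finite S \<longrightarrow> k < card S"
  shows "finite {b. gen_fact_factor S T k b \<noteq> 1}"
  using finite_alpha_seq_support[OF assms]
  by (rule finite_subset[rotated]) (auto simp: gen_fact_factor_def)

lemma gen_fact_factor_pos:
  assumes "S \<noteq> {}" "finite S \<longrightarrow> k < card S"
  shows "0 < gen_fact_factor S T k b"
proof (cases "b = 1")
  case False
  then obtain n where n: "alpha_seq S b k = enat n"
    using alpha_seq_neq_infinity[OF assms] by blast
  moreover have "b = 0 \<Longrightarrow> n = 0"
    using alpha_seq_0[OF assms] n by (simp add: zero_enat_def)
  ultimately show ?thesis
    by (auto simp: gen_fact_factor_def)
qed (simp add: gen_fact_factor_def)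

lemma gen_fact_factor_mult_dvd:
  assumes "S \<noteq> {}" "l \<le> k" "finite S \<longrightarrow> k < card S"
  shows "gen_fact_factor S T l b * gen_fact_factor S T (k - l) b dvd gen_fact_factor S T k b"
proof -
  have "finite S \<longrightarrow> l < card S" "finite S \<longrightarrow> k - l < card S"
    using assms by auto
  note small = assms(3) this
  consider "b \<notin> T \<or> b = 1" | "b = 0" | "b \<ge> 2"
    by linarith
  then show ?thesis
  proof cases
    case 1
    then show ?thesis
      by (auto simp: gen_fact_factor_def)
  next
    case 2
    then show ?thesis
      using alpha_seq_0[OF assms(1)] small by (simp add: gen_fact_factor_def)
  next
    case 3
    obtain n where n: "alpha_seq S b k = enat n"
      using alpha_seq_neq_infinity[OF assms(1,3)] 3 by fastforce
    have "alpha_seq S b l + alpha_seq S b (k - l) \<le> enat n"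
      using alpha_seq_superadditive[OF assms(1) 3, of l "k - l"] assms(2) n by simp
    then obtain p q where "alpha_seq S b l = enat p" "alpha_seq S b (k - l) = enat q" "p + q \<le> n"
      by (cases "alpha_seq S b l"; cases "alpha_seq S b (k - l)") auto
    then show ?thesis
      using n by (simp add: gen_fact_factor_def le_imp_power_dvd power_add[symmetric])
  qed
qed

lemma Prod_any_pos:
  fixes f :: "'a \<Rightarrow> 'b::linordered_semidom"
  assumes "\<And>x. 0 < f x"
  shows "0 < Prod_any f"
  unfolding Prod_any.expand_set using assms by (intro prod_pos)

lemma Prod_any_dvd_Prod_any_nat:
  fixes f g :: "'a \<Rightarrow> nat"
  assumes "finite {x. g x \<noteq> 1}" "\<And>x. f x dvd g x"
  shows "Prod_any f dvd Prod_any g"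
proof -
  have "f x = 1" if "g x = 1" for x
    using assms(2)[of x] that by simp
  then have "{x. f x \<noteq> 1} \<subseteq> {x. g x \<noteq> 1}"
    by blast
  then show ?thesis
    using assms by (simp add: Prod_any.expand_superset[of "{x. g x \<noteq> 1}"] prod_dvd_prod)
qed

lemma gen_fact_pos:
  assumes "S \<noteq> {}" "finite S \<longrightarrow> k < card S"
  shows "0 < gen_fact S T k"
  unfolding gen_fact_eq_Prod_any by (intro Prod_any_pos gen_fact_factor_pos[OF assms])

lemma gen_fact_mult_dvd:
  assumes "S \<noteq> {}" "l \<le> k" "finite S \<longrightarrow> k < card S"
  shows "gen_fact S T l * gen_fact S T (k - l) dvd gen_fact S T k"
proof -
  have "finite S \<longrightarrow> l < card S" "finite S \<longrightarrow> k - l < card S"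
    using assms by auto
  then have "gen_fact S T l * gen_fact S T (k - l)
      = Prod_any (\<lambda>b. gen_fact_factor S T l b * gen_fact_factor S T (k - l) b)"
    unfolding gen_fact_eq_Prod_any
    by (intro Prod_any.distrib[symmetric] finite_gen_fact_factor_support[OF assms(1)])
  also have "\<dots> dvd gen_fact S T k"
    unfolding gen_fact_eq_Prod_any
    by (intro Prod_any_dvd_Prod_any_nat finite_gen_fact_factor_support
        gen_fact_factor_mult_dvd assms)
  finally show ?thesis .
qed

theorem theorem3p14:
  fixes S :: "int set" and T :: "nat set" and k l :: nat
  assumes "S \<noteq> {}"
    and "l \<le> k"
    and "finite S \<longrightarrow> k < card S"
  shows "\<exists>m::nat. m > 0 \<and>
    real (gen_fact S T k) / (real (gen_fact S T l) * real (gen_fact S T (k - l))) = real m"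
proof -
  obtain m where m: "gen_fact S T k = gen_fact S T l * gen_fact S T (k - l) * m"
    using gen_fact_mult_dvd[OF assms] by blast
  moreover have "0 < gen_fact S T k"
    using gen_fact_pos[OF assms(1,3)] .
  ultimately show ?thesis
    by (intro exI[of _ m]) (simp add: field_simps)
qed

end
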